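(* Let $1\le d'<d$ and let $K\subset\mathcal{D}_0$ be a $d'$-POU set about $x_0$ that is contained in the affine subspace $\{y\in\mathbb{R}^d:y_{d'+1}=x_{d'+1},\dots,y_d=x_d\}$ for some $x_i\ge x_{i0}$ ($i>d'$), with $0<\lambda_{d'}(K_{x_{d'+1},\dots,x_d})<\infty$, where $K_{x_{d'+1},\dots,x_d}=\{(y_1,\dots,y_{d'}):(y_1,\dots,y_{d'},x_{d'+1},\dots,x_d)\in K\}$. Then $W_K$ is an extreme point of the class of $d'$-POU distributions about $x_0$ on $\mathcal{D}_0$.
   Context: $x_0\in\mathbb{R}^{d'}\times[-\infty,\infty)^{d-d'}$, $\mathcal{D}_0=\{x\ge x_0\}$ (componentwise). A measurable $K\subset\mathcal{D}_0$ is $d'$-POU about $x_0$ if $x\in K$, $x_i\ge x'_i\ge x_{i0}$ ($i\le d'$), $x'_i=x_i$ ($i>d'$) imply $x'\in K$; a distribution on $\mathcal{D}_0$ is $d'$-POU about $x_0$ if it lies in the closed (weak topology) convex hull of uniform distributions on $d'$-POU subsets of $\mathcal{D}_0$. $W_K$ is the uniform distribution on $K$ with respect to $d'$-dimensional Lebesgue measure on the subspace containing $K$. *)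

theory Defs
  imports "HOL-Probability.Probability"
begin

text \<open>Points of R^d are pairs (y,z) with y in R^d' (first d' coordinates, index type 'n,
  d' = CARD('n)) and z in R^(d-d') (last d-d' coordinates, index type 'm).
  The base point x0 = (a,b) has a in R^d' and b in [-inf,inf)^(d-d').\<close>

definition D0 :: "real^'n \<Rightarrow> ('m \<Rightarrow> ereal) \<Rightarrow> ((real^'n) \<times> (real^'m)) set" where
  "D0 a b = {(y,z). (\<forall>i. a$i \<le> y$i) \<and> (\<forall>j. b j \<le> ereal (z$j))}"

definition POU_set :: "real^'n \<Rightarrow> ('m \<Rightarrow> ereal) \<Rightarrow> ((real^'n) \<times> (real^'m)) set \<Rightarrow> bool" where
  "POU_set a b K \<longleftrightarrow> K \<in> sets borel \<and> K \<subseteq> D0 a b \<and>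
     (\<forall>y z y'. (y,z) \<in> K \<longrightarrow> (\<forall>i. y$i \<ge> y'$i \<and> y'$i \<ge> a$i) \<longrightarrow> (y',z) \<in> K)"

definition slice :: "((real^'n) \<times> (real^'m)) set \<Rightarrow> real^'m \<Rightarrow> (real^'n) set" where
  "slice K c = {y. (y,c) \<in> K}"

text \<open>Uniform distribution W_K on a set K contained in the affine subspace {z = c},
  w.r.t. d'-dimensional Lebesgue measure on that subspace.\<close>
definition W :: "((real^'n) \<times> (real^'m)) set \<Rightarrow> real^'m \<Rightarrow> ((real^'n) \<times> (real^'m)) measure" where
  "W K c = distr (uniform_measure lborel (slice K c)) borel (\<lambda>y. (y,c))"

definition POU_uniforms :: "real^'n \<Rightarrow> ('m \<Rightarrow> ereal) \<Rightarrow> ((real^'n) \<times> (real^'m)) measure set" where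
  "POU_uniforms a b = {W K c | K c. POU_set a b K \<and> K \<subseteq> {(y,z). z = c} \<and>
      0 < emeasure lborel (slice K c) \<and> emeasure lborel (slice K c) < \<infinity>}"

definition distributions_on :: "((real^'n) \<times> (real^'m)) set \<Rightarrow> ((real^'n) \<times> (real^'m)) measure set" where
  "distributions_on D = {\<mu>. prob_space \<mu> \<and> sets \<mu> = sets borel \<and> emeasure \<mu> D = 1}"

definition measure_convex_hull :: "'a measure set \<Rightarrow> 'a measure \<Rightarrow> bool" where
  "measure_convex_hull S \<mu> \<longleftrightarrow> (\<exists>n::nat. \<exists>c \<nu>.
      (\<forall>i<n. \<nu> i \<in> S \<and> c i \<ge> (0::real)) \<and> (\<Sum>i<n. c i) = 1 \<and>
      (\<forall>A \<in> sets \<mu>. measure \<mu> A = (\<Sum>i<n. c i * measure (\<nu> i) A)))"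

text \<open>Closure within the distributions on D0 w.r.t. the weak topology, i.e. the initial topology
  of the maps mu |-> integral of f for bounded continuous f (basic neighbourhoods).\<close>
definition weak_closure :: "('a::topological_space) measure set \<Rightarrow> 'a measure set \<Rightarrow> 'a measure set" where
  "weak_closure P S = {\<mu> \<in> P. \<forall>F e. finite F \<and> e > 0 \<and>
       (\<forall>f\<in>F. continuous_on UNIV f \<and> bounded (range (f::'a \<Rightarrow> real))) \<longrightarrow>
       (\<exists>\<nu>\<in>S. \<forall>f\<in>F. \<bar>(\<integral>x. f x \<partial>\<mu>) - (\<integral>x. f x \<partial>\<nu>)\<bar> < e)}"

definition POU_distributions :: "real^'n \<Rightarrow> ('m \<Rightarrow> ereal) \<Rightarrow> ((real^'n) \<times> (real^'m)) measure set" where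
  "POU_distributions a b = weak_closure (distributions_on (D0 a b))
      {\<mu> \<in> distributions_on (D0 a b). measure_convex_hull (POU_uniforms a b) \<mu>}"

definition extreme_point_measures :: "'a measure set \<Rightarrow> 'a measure \<Rightarrow> bool" where
  "extreme_point_measures C \<mu> \<longleftrightarrow> \<mu> \<in> C \<and>
     (\<forall>\<mu>1 \<in> C. \<forall>\<mu>2 \<in> C. \<forall>t::real. 0 < t \<and> t < 1 \<and>
        (\<forall>A \<in> sets \<mu>. measure \<mu> A = t * measure \<mu>1 A + (1 - t) * measure \<mu>2 A)
        \<longrightarrow> \<mu>1 = \<mu> \<and> \<mu>2 = \<mu>)"

end

theory Submission
  imports Defs
begin

text \<open>Every \<open>d'\<close>-POU distribution \<open>\<mu>\<close> obeys a one-sided translation inequality: moving a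
  cube in the first \<open>d'\<close> coordinates towards \<open>x\<^sub>0\<close>, within the orthant above \<open>x\<^sub>0\<close>, cannot
  decrease its \<open>\<mu>\<close>-mass. For a uniform distribution \<open>W\<^sub>K\<close> this is downward closedness of \<open>K\<close>
  plus translation invariance of Lebesgue measure; it survives convex combinations and, tested
  against continuous approximations of cube indicators, weak limits.

  Now let \<open>W\<^sub>K = t \<mu>\<^sub>1 + (1 - t) \<mu>\<^sub>2\<close>. On cubes inside the slice of \<open>K\<close> the inequality is an
  equality for \<open>W\<^sub>K\<close>, hence for both components. So the marginal of \<open>\<mu>\<^sub>1\<close> in the first \<open>d'\<close>
  coordinates gives the same mass to all dyadic cubes of one size inside the slice, i.e. it is
  proportional to Lebesgue measure on them. Exhausting the open kernel of the slice, which has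
  full measure, by dyadic cubes forces the constants to 1, so the marginal is uniform on the
  slice. As \<open>t \<mu>\<^sub>1 \<le> W\<^sub>K\<close>, \<open>\<mu>\<^sub>1\<close> lives on the fibre of \<open>K\<close>, hence \<open>\<mu>\<^sub>1 = W\<^sub>K\<close>.\<close>

lemma nn_integral_convex_combination:
  fixes \<mu> :: "'a measure" and \<nu> :: "nat \<Rightarrow> 'a measure"
  assumes fin: "\<And>i. i < n \<Longrightarrow> finite_measure (\<nu> i)"
    and sets: "\<And>i. i < n \<Longrightarrow> sets (\<nu> i) = sets \<mu>"
    and fin_\<mu>: "finite_measure \<mu>"
    and nonneg: "\<And>i. i < n \<Longrightarrow> 0 \<le> c i"
    and eq: "\<And>A. A \<in> sets \<mu> \<Longrightarrow> measure \<mu> A = (\<Sum>i<n. c i * measure (\<nu> i) A)"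
    and f: "f \<in> borel_measurable \<mu>"
  shows "(\<integral>\<^sup>+x. f x \<partial>\<mu>) = (\<Sum>i<n. ennreal (c i) * (\<integral>\<^sup>+x. f x \<partial>\<nu> i))"
proof -
  have meas: "u \<in> borel_measurable (\<nu> i)" if "i < n" "u \<in> borel_measurable \<mu>"
    for i and u :: "'a \<Rightarrow> ennreal"
    by (subst measurable_cong_sets[OF sets[OF that(1)] refl]) (rule that(2))
  from f show ?thesis
  proof (induction rule: borel_measurable_induct)
    case (cong f g)
    have "(\<integral>\<^sup>+x. f x \<partial>\<nu> i) = (\<integral>\<^sup>+x. g x \<partial>\<nu> i)" if "i < n" for i
    proof -
      have "space (\<nu> i) = space \<mu>" using sets[OF that] by (rule sets_eq_imp_space_eq)
      then show ?thesis using cong(3) by (intro nn_integral_cong) simp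
    qed
    moreover have "(\<integral>\<^sup>+x. f x \<partial>\<mu>) = (\<integral>\<^sup>+x. g x \<partial>\<mu>)"
      using cong(3) by (intro nn_integral_cong) auto
    ultimately show ?case using cong(4) by simp
  next
    case (set A)
    have "(\<integral>\<^sup>+x. indicator A x \<partial>\<mu>) = ennreal (\<Sum>i<n. c i * measure (\<nu> i) A)"
      using set eq[OF set] finite_measure.emeasure_eq_measure[OF fin_\<mu>] by simp
    also have "\<dots> = (\<Sum>i<n. ennreal (c i * measure (\<nu> i) A))"
      by (rule sum_ennreal[symmetric]) (use nonneg in auto)
    also have "\<dots> = (\<Sum>i<n. ennreal (c i) * (\<integral>\<^sup>+x. indicator A x \<partial>\<nu> i))"
    proof (rule sum.cong)
      fix i assume i: "i \<in> {..<n}"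
      then have "A \<in> sets (\<nu> i)" using sets set by auto
      then show "ennreal (c i * measure (\<nu> i) A) = ennreal (c i) * (\<integral>\<^sup>+x. indicator A x \<partial>\<nu> i)"
        using fin[of i] i nonneg[of i] by (simp add: ennreal_mult finite_measure.emeasure_eq_measure)
    qed simp
    finally show ?case .
  next
    case (mult u r)
    have "(\<integral>\<^sup>+x. r * u x \<partial>\<mu>) = r * (\<integral>\<^sup>+x. u x \<partial>\<mu>)"
      using mult(2) by (rule nn_integral_cmult)
    also have "\<dots> = (\<Sum>i<n. ennreal (c i) * (\<integral>\<^sup>+x. r * u x \<partial>\<nu> i))"
      unfolding mult.IH sum_distrib_left
    proof (rule sum.cong)
      fix i assume "i \<in> {..<n}"
      then have "(\<integral>\<^sup>+x. r * u x \<partial>\<nu> i) = r * (\<integral>\<^sup>+x. u x \<partial>\<nu> i)"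
        using meas[OF _ mult(2)] by (intro nn_integral_cmult) auto
      then show "r * (ennreal (c i) * (\<integral>\<^sup>+x. u x \<partial>\<nu> i)) = ennreal (c i) * (\<integral>\<^sup>+x. r * u x \<partial>\<nu> i)"
        by (simp add: mult.left_commute)
    qed simp
    finally show ?case .
  next
    case (add u v)
    have "u \<in> borel_measurable (\<nu> i)" "v \<in> borel_measurable (\<nu> i)" if "i < n" for i
      using meas[OF that add(1)] meas[OF that add(3)] .
    then have "(\<integral>\<^sup>+x. v x + u x \<partial>\<nu> i) = (\<integral>\<^sup>+x. v x \<partial>\<nu> i) + (\<integral>\<^sup>+x. u x \<partial>\<nu> i)" if "i < n" for i
      using that by (intro nn_integral_add) auto
    moreover have "(\<integral>\<^sup>+x. v x + u x \<partial>\<mu>) = (\<integral>\<^sup>+x. v x \<partial>\<mu>) + (\<integral>\<^sup>+x. u x \<partial>\<mu>)"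
      using add(1,3) by (intro nn_integral_add) auto
    ultimately show ?case
      unfolding add.IH by (simp add: distrib_left sum.distrib)
  next
    case (seq U)
    have "(\<integral>\<^sup>+x. (SUP j. U j) x \<partial>\<nu> i) = (SUP j. \<integral>\<^sup>+x. U j x \<partial>\<nu> i)" if "i < n" for i
      unfolding SUP_apply image_comp using seq(3) meas[OF that seq(1)]
      by (intro nn_integral_monotone_convergence_SUP) auto
    moreover have "incseq (\<lambda>j. ennreal (c i) * (\<integral>\<^sup>+x. U j x \<partial>\<nu> i))" for i
      using seq(3) unfolding incseq_def le_fun_def by (auto intro!: mult_left_mono nn_integral_mono)
    moreover have "(\<integral>\<^sup>+x. (SUP j. U j) x \<partial>\<mu>) = (SUP j. \<integral>\<^sup>+x. U j x \<partial>\<mu>)"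
      unfolding SUP_apply image_comp using seq(1,3) by (intro nn_integral_monotone_convergence_SUP) auto
    ultimately show ?case
      unfolding seq.IH by (simp add: ennreal_SUP_sum SUP_mult_left_ennreal)
  qed
qed

lemma borel_measurable_fst_borel[measurable]:
  "fst \<in> borel_measurable (borel :: ('a::topological_space \<times> 'b::topological_space) measure)"
  by (rule borel_measurable_continuous_onI) (intro continuous_intros)

lemma measurable_Pair_const_borel[measurable]:
  "(\<lambda>y. (y, c)) \<in> (borel :: 'a::topological_space measure) \<rightarrow>\<^sub>M (borel :: ('a \<times> 'b::topological_space) measure)"
  by (rule borel_measurable_continuous_onI) (intro continuous_intros)

lemma sets_slice[measurable]:
  assumes "K \<in> sets borel" shows "slice K c \<in> sets borel"
proof -
  have "slice K c = (\<lambda>y. (y, c)) -` K" unfolding slice_def by auto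
  then show ?thesis using assms by (simp add: measurable_sets_borel[OF measurable_Pair_const_borel])
qed

lemma sets_W[simp]: "sets (W K c) = sets borel"
  unfolding W_def by simp

lemma prob_space_W:
  assumes "0 < emeasure lborel (slice K c)" "emeasure lborel (slice K c) < \<infinity>"
  shows "prob_space (W K c)"
  unfolding W_def
  by (rule prob_space.prob_space_distr) (use assms in \<open>auto intro!: prob_space_uniform_measure\<close>)

lemma nn_integral_W:
  fixes K :: "((real^'n) \<times> (real^'m)) set"
  assumes "K \<in> sets borel" and h: "h \<in> borel_measurable borel"
  shows "(\<integral>\<^sup>+x. h x \<partial>W K c) =
    (\<integral>\<^sup>+y. h (y, c) * indicator (slice K c) y \<partial>lborel) / emeasure lborel (slice K c)"
proof -
  have m: "(\<lambda>y. (y, c)) \<in> uniform_measure lborel (slice K c) \<rightarrow>\<^sub>M (borel :: ((real^'n) \<times> (real^'m)) measure)"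
    by (simp add: measurable_cong_sets[OF sets_uniform_measure refl])
  have "(\<integral>\<^sup>+x. h x \<partial>W K c) = (\<integral>\<^sup>+y. h (y, c) \<partial>uniform_measure lborel (slice K c))"
    unfolding W_def by (rule nn_integral_distr[OF m]) (simp add: h)
  also have "\<dots> = (\<integral>\<^sup>+y. h (y, c) * indicator (slice K c) y \<partial>lborel) / emeasure lborel (slice K c)"
    using h assms(1) by (intro nn_integral_uniform_measure) auto
  finally show ?thesis .
qed

section \<open>Translation inequality for POU distributions\<close>

definition nonneg_supported_above :: "real^'n \<Rightarrow> (real^'n \<Rightarrow> real) \<Rightarrow> bool" where
  "nonneg_supported_above q g \<longleftrightarrow> (\<forall>y. 0 \<le> g y) \<and> (\<forall>y. g y \<noteq> 0 \<longrightarrow> (\<forall>k. q$k \<le> y$k))"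

lemma nn_integral_W_shift_le:
  fixes K :: "((real^'n) \<times> (real^'m)) set"
  assumes pou: "POU_set a b K" and g: "g \<in> borel_measurable borel"
    and supp: "nonneg_supported_above (a + v) g" and v: "\<forall>k. 0 \<le> v$k"
  shows "(\<integral>\<^sup>+x. ennreal (g (fst x)) \<partial>W K c) \<le> (\<integral>\<^sup>+x. ennreal (g (fst x + v)) \<partial>W K c)"
proof -
  let ?S = "slice K c"
  have K: "K \<in> sets borel" using pou unfolding POU_set_def by auto
  define G where "G u = ennreal (g u) * indicator ?S (u - v)" for u
  have [measurable]: "?S \<in> sets borel" "g \<in> borel_measurable borel" using K g by auto
  have [measurable]: "G \<in> borel_measurable borel" unfolding G_def by measurable
  \<comment> \<open>where \<open>g\<close> is nonzero, \<open>u - v\<close> still lies above \<open>a\<close>, so \<open>u \<in> S\<close> forces \<open>u - v \<in> S\<close>\<close>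
  have "(\<integral>\<^sup>+y. ennreal (g y) * indicator ?S y \<partial>lborel) \<le> (\<integral>\<^sup>+y. G y \<partial>lborel)"
  proof (rule nn_integral_mono)
    fix u :: "real^'n"
    show "ennreal (g u) * indicator ?S u \<le> G u"
    proof (cases "g u \<noteq> 0 \<and> (u, c) \<in> K")
      case True
      then have "(u - v, c) \<in> K"
        using pou supp v unfolding POU_set_def nonneg_supported_above_def
        by (smt (verit, best) vector_add_component vector_minus_component)
      then show ?thesis using True unfolding G_def slice_def by (simp add: indicator_def)
    qed (auto simp: G_def slice_def)
  qed
  also have "(\<integral>\<^sup>+y. G y \<partial>lborel) = (\<integral>\<^sup>+y. G y \<partial>distr lborel borel ((+) v))"
    by (simp add: lborel_distr_plus)
  also have "\<dots> = (\<integral>\<^sup>+y. ennreal (g (y + v)) * indicator ?S y \<partial>lborel)"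
    by (subst nn_integral_distr) (auto simp: G_def add.commute)
  finally show ?thesis
    by (simp add: nn_integral_W[OF K] divide_right_mono_ennreal)
qed

lemma integral_mono_of_nn_integral_le:
  fixes f g :: "'a \<Rightarrow> real"
  assumes M: "finite_measure M"
    and f: "f \<in> borel_measurable M" "\<And>x. 0 \<le> f x"
    and g: "g \<in> borel_measurable M" "\<And>x. 0 \<le> g x" "\<And>x. g x \<le> B"
    and le: "(\<integral>\<^sup>+x. f x \<partial>M) \<le> (\<integral>\<^sup>+x. g x \<partial>M)"
  shows "(\<integral>x. f x \<partial>M) \<le> (\<integral>x. g x \<partial>M)"
proof -
  have "(\<integral>\<^sup>+x. g x \<partial>M) \<le> (\<integral>\<^sup>+x. ennreal B \<partial>M)"
    using g(3) by (intro nn_integral_mono ennreal_leI)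
  also have "\<dots> < \<infinity>"
    using finite_measure.emeasure_finite[OF M] by (simp add: ennreal_mult_less_top top.not_eq_extremum)
  finally have "(\<integral>\<^sup>+x. g x \<partial>M) < \<infinity>" .
  then have "enn2real (\<integral>\<^sup>+x. f x \<partial>M) \<le> enn2real (\<integral>\<^sup>+x. g x \<partial>M)"
    using le by (intro enn2real_mono) auto
  then show ?thesis
    using f g by (simp add: integral_eq_nn_integral)
qed

lemma integral_convex_hull_shift_le:
  fixes \<nu> :: "((real^'n) \<times> (real^'m)) measure"
  assumes \<nu>: "\<nu> \<in> distributions_on (D0 a b)" and hull: "measure_convex_hull (POU_uniforms a b) \<nu>"
    and g: "g \<in> borel_measurable borel" "bounded (range g)"
    and supp: "nonneg_supported_above (a + v) g" and v: "\<forall>k. 0 \<le> v$k"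
  shows "(\<integral>x. g (fst x) \<partial>\<nu>) \<le> (\<integral>x. g (fst x + v) \<partial>\<nu>)"
proof -
  from hull obtain n :: nat and c \<nu>' where
        \<nu>': "\<forall>i<n. \<nu>' i \<in> POU_uniforms a b \<and> c i \<ge> 0"
    and eq: "\<forall>A \<in> sets \<nu>. measure \<nu> A = (\<Sum>i<n. c i * measure (\<nu>' i) A)"
    unfolding measure_convex_hull_def by blast
  have prob: "prob_space \<nu>" and sets: "sets \<nu> = sets borel"
    using \<nu> unfolding distributions_on_def by auto
  have uniform: "\<exists>K c'. \<nu>' i = W K c' \<and> POU_set a b K \<and>
      0 < emeasure lborel (slice K c') \<and> emeasure lborel (slice K c') < \<infinity>" if "i < n" for i
    using \<nu>' that unfolding POU_uniforms_def by blast
  have fin: "finite_measure (\<nu>' i)" if "i < n" for i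
    using uniform[OF that] prob_space_W prob_space.finite_measure by metis
  have sets': "sets (\<nu>' i) = sets \<nu>" if "i < n" for i
    using uniform[OF that] sets by fastforce
  have meas: "(\<lambda>x. ennreal (g (fst x + w))) \<in> borel_measurable \<nu>" for w
    using g(1) by (simp add: measurable_cong_sets[OF sets refl])
  have combination: "(\<integral>\<^sup>+x. f x \<partial>\<nu>) = (\<Sum>i<n. ennreal (c i) * (\<integral>\<^sup>+x. f x \<partial>\<nu>' i))"
    if "f \<in> borel_measurable \<nu>" for f
    using fin sets' prob \<nu>' eq that
    by (intro nn_integral_convex_combination) (auto simp: prob_space.finite_measure)
  have "(\<integral>\<^sup>+x. ennreal (g (fst x)) \<partial>\<nu>) = (\<Sum>i<n. ennreal (c i) * (\<integral>\<^sup>+x. ennreal (g (fst x)) \<partial>\<nu>' i))"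
    using combination[OF meas[of 0]] by simp
  also have "\<dots> \<le> (\<Sum>i<n. ennreal (c i) * (\<integral>\<^sup>+x. ennreal (g (fst x + v)) \<partial>\<nu>' i))"
    using uniform nn_integral_W_shift_le[OF _ g(1) supp v]
    by (intro sum_mono mult_left_mono) fastforce+
  also have "\<dots> = (\<integral>\<^sup>+x. ennreal (g (fst x + v)) \<partial>\<nu>)"
    using combination[OF meas[of v]] by simp
  finally have nn_le: "(\<integral>\<^sup>+x. ennreal (g (fst x)) \<partial>\<nu>) \<le> (\<integral>\<^sup>+x. ennreal (g (fst x + v)) \<partial>\<nu>)" .
  obtain B where B: "\<And>y. \<bar>g y\<bar> \<le> B" using g(2) unfolding bounded_iff by auto
  have nonneg: "0 \<le> g y" for y using supp unfolding nonneg_supported_above_def by auto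
  have real_meas: "(\<lambda>x. g (fst x + w)) \<in> borel_measurable \<nu>" for w
    using g(1) by (simp add: measurable_cong_sets[OF sets refl])
  show ?thesis
    using real_meas[of 0] real_meas[of v] nonneg B nn_le
    by (intro integral_mono_of_nn_integral_le[OF prob_space.finite_measure[OF prob], where B=B])
      (auto simp: abs_le_iff)
qed

lemma integral_POU_distribution_shift_le:
  fixes \<mu> :: "((real^'n) \<times> (real^'m)) measure"
  assumes \<mu>: "\<mu> \<in> POU_distributions a b"
    and g: "continuous_on UNIV g" "bounded (range g)"
    and supp: "nonneg_supported_above (a + v) g" and v: "\<forall>k. 0 \<le> v$k"
  shows "(\<integral>x. g (fst x) \<partial>\<mu>) \<le> (\<integral>x. g (fst x + v) \<partial>\<mu>)"
proof (rule ccontr)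
  define \<phi> where "\<phi> x = g (fst x)" for x :: "(real^'n) \<times> (real^'m)"
  define \<psi> where "\<psi> x = g (fst x + v)" for x :: "(real^'n) \<times> (real^'m)"
  assume "\<not> (\<integral>x. g (fst x) \<partial>\<mu>) \<le> (\<integral>x. g (fst x + v) \<partial>\<mu>)"
  then have gap: "0 < ((\<integral>x. \<phi> x \<partial>\<mu>) - (\<integral>x. \<psi> x \<partial>\<mu>)) / 2" (is "0 < ?e")
    unfolding \<phi>_def \<psi>_def by simp
  have "continuous_on UNIV \<phi>" "continuous_on UNIV \<psi>"
    unfolding \<phi>_def \<psi>_def by (auto intro!: continuous_on_compose2[OF g(1)] continuous_intros)
  moreover have "bounded (range \<phi>)" "bounded (range \<psi>)"
    unfolding \<phi>_def \<psi>_def by (auto intro: bounded_subset[OF g(2)])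
  ultimately obtain \<nu> where \<nu>: "\<nu> \<in> distributions_on (D0 a b)" "measure_convex_hull (POU_uniforms a b) \<nu>"
    and close: "\<forall>f\<in>{\<phi>, \<psi>}. \<bar>(\<integral>x. f x \<partial>\<mu>) - (\<integral>x. f x \<partial>\<nu>)\<bar> < ?e"
    using \<mu> gap unfolding POU_distributions_def weak_closure_def
    by (elim CollectE conjE) (erule allE[of _ "{\<phi>, \<psi>}"], erule allE[of _ ?e], auto)
  have "(\<integral>x. \<phi> x \<partial>\<nu>) \<le> (\<integral>x. \<psi> x \<partial>\<nu>)"
    unfolding \<phi>_def \<psi>_def
    by (rule integral_convex_hull_shift_le[OF \<nu> borel_measurable_continuous_onI[OF g(1)] g(2) supp v])
  then show False using close unfolding abs_less_iff by auto
qed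

definition cube :: "real^'n \<Rightarrow> real \<Rightarrow> (real^'n) set" where
  "cube p \<delta> = {y. \<forall>k. p$k < y$k \<and> y$k \<le> p$k + \<delta>}"

lemma sets_cube[measurable]: "cube p \<delta> \<in> sets borel"
  unfolding cube_def by measurable

lemma mem_cube_diff: "y \<in> cube (p - v) \<delta> \<longleftrightarrow> y + v \<in> cube p \<delta>"
  unfolding cube_def by (auto simp: algebra_simps)

lemma emeasure_lborel_cube_diff: "emeasure lborel (cube (p - v) \<delta>) = emeasure lborel (cube p \<delta>)"
proof -
  have "emeasure lborel (cube p \<delta>) = emeasure (distr lborel borel ((+) v)) (cube p \<delta>)"
    by (simp add: lborel_distr_plus)
  also have "\<dots> = emeasure lborel ((+) v -` cube p \<delta>)"
    by (subst emeasure_distr) auto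
  also have "(+) v -` cube p \<delta> = cube (p - v) \<delta>"
    by (auto simp: mem_cube_diff add.commute)
  finally show ?thesis by simp
qed

definition ramp :: "real \<Rightarrow> real \<Rightarrow> real \<Rightarrow> real \<Rightarrow> real" where
  "ramp \<delta> n p t = max 0 (min 1 (min (n * (t - p)) (1 + n * (p + \<delta> - t))))"

lemma ramp_bounds: "0 \<le> ramp \<delta> n p t" "ramp \<delta> n p t \<le> 1"
  unfolding ramp_def by auto

lemma ramp_eq_0: "n * (t - p) \<le> 0 \<or> 1 + n * (p + \<delta> - t) \<le> 0 \<Longrightarrow> ramp \<delta> n p t = 0"
  unfolding ramp_def by (rule max_absorb1) (auto simp: min_le_iff_disj)

lemma ramp_eq_1: "1 \<le> n * (t - p) \<Longrightarrow> 0 \<le> n * (p + \<delta> - t) \<Longrightarrow> ramp \<delta> n p t = 1"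
  unfolding ramp_def by (simp add: min_def)

lemma eventually_le_real_Suc_mult:
  assumes "(c::real) > 0" shows "eventually (\<lambda>n. x \<le> real (Suc n) * c) sequentially"
proof -
  obtain N :: nat where N: "x / c < real N" using reals_Archimedean2 by blast
  show ?thesis
  proof (rule eventually_sequentiallyI[of N])
    fix n assume "N \<le> n"
    then have "real N * c \<le> real (Suc n) * c" using assms by (intro mult_right_mono) auto
    moreover have "x < real N * c" using N assms by (simp add: divide_less_eq)
    ultimately show "x \<le> real (Suc n) * c" by linarith
  qed
qed

lemma ramp_tendsto_indicator:
  "(\<lambda>n. ramp \<delta> (real (Suc n)) p t) \<longlonglongrightarrow> indicator {p<..p+\<delta>} t"
proof -
  consider "t \<le> p" | "p < t" "t \<le> p + \<delta>" | "p + \<delta> < t" by linarith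
  then show ?thesis
  proof cases
    case 1
    then have "ramp \<delta> (real (Suc n)) p t = 0" for n
      by (intro ramp_eq_0) (simp add: mult_nonneg_nonpos)
    then show ?thesis using 1 by simp
  next
    case 2
    have "eventually (\<lambda>n. 1 \<le> real (Suc n) * (t - p)) sequentially"
      using 2 by (intro eventually_le_real_Suc_mult) auto
    then have "eventually (\<lambda>n. ramp \<delta> (real (Suc n)) p t = 1) sequentially"
      by eventually_elim (use 2 in \<open>auto intro!: ramp_eq_1\<close>)
    then show ?thesis using 2 by (simp add: tendsto_eventually)
  next
    case 3
    have "eventually (\<lambda>n. 1 \<le> real (Suc n) * (t - p - \<delta>)) sequentially"
      using 3 by (intro eventually_le_real_Suc_mult) auto
    then have "eventually (\<lambda>n. ramp \<delta> (real (Suc n)) p t = 0) sequentially"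
      by eventually_elim (auto intro!: ramp_eq_0 simp: algebra_simps)
    then show ?thesis using 3 by (simp add: tendsto_eventually)
  qed
qed

definition cube_approx :: "real \<Rightarrow> nat \<Rightarrow> real^'n \<Rightarrow> real^'n \<Rightarrow> real" where
  "cube_approx \<delta> n p y = (\<Prod>k\<in>UNIV. ramp \<delta> (real (Suc n)) (p$k) (y$k))"

lemma cube_approx_bounds: "0 \<le> cube_approx \<delta> n p y" "cube_approx \<delta> n p y \<le> 1"
  unfolding cube_approx_def by (auto intro!: prod_nonneg prod_le_1 ramp_bounds)

lemma continuous_on_cube_approx: "continuous_on UNIV (cube_approx \<delta> n p)"
  unfolding cube_approx_def ramp_def by (intro continuous_intros)

lemma bounded_range_cube_approx: "bounded (range (cube_approx \<delta> n p))"
  unfolding bounded_iff by (intro exI[of _ 1]) (auto simp: abs_of_nonneg cube_approx_bounds)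

lemma nonneg_supported_above_cube_approx:
  assumes "\<forall>k. q$k \<le> p$k"
  shows "nonneg_supported_above q (cube_approx \<delta> n p)"
  unfolding nonneg_supported_above_def
proof (intro conjI allI impI)
  fix y k assume "cube_approx \<delta> n p y \<noteq> 0"
  then have "ramp \<delta> (real (Suc n)) (p$k) (y$k) \<noteq> 0" unfolding cube_approx_def by auto
  then have "p$k < y$k" using ramp_eq_0[of "real (Suc n)" "y$k" "p$k" \<delta>]
    by (cases "p$k < y$k") (auto simp: mult_nonneg_nonpos)
  then show "q$k \<le> y$k" using assms by (smt (verit))
qed (rule cube_approx_bounds)

lemma cube_approx_tendsto_indicator: "(\<lambda>n. cube_approx \<delta> n p y) \<longlonglongrightarrow> indicator (cube p \<delta>) y"
proof -
  have "indicator (cube p \<delta>) y = (\<Prod>k\<in>UNIV. (indicator {p$k<..p$k+\<delta>} (y$k) :: real))"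
    unfolding cube_def by (auto simp: indicator_def prod_zero_iff)
  then show ?thesis unfolding cube_approx_def by (simp only:) (intro tendsto_prod ramp_tendsto_indicator)
qed

lemma integral_cube_approx_tendsto:
  fixes \<mu> :: "((real^'n) \<times> (real^'m)) measure"
  assumes fin: "finite_measure \<mu>" and sets: "sets \<mu> = sets borel"
  shows "(\<lambda>n. \<integral>x. cube_approx \<delta> n p (fst x + v) \<partial>\<mu>) \<longlonglongrightarrow> measure \<mu> (fst -` cube (p - v) \<delta>)"
proof -
  have [measurable]: "cube_approx \<delta> n p \<in> borel_measurable borel" for n
    by (rule borel_measurable_continuous_onI[OF continuous_on_cube_approx])
  have [measurable]: "fst -` cube (p - v) \<delta> \<in> sets \<mu>"
    unfolding sets by (simp add: measurable_sets_borel[OF borel_measurable_fst_borel])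
  have "(\<lambda>n. \<integral>x. cube_approx \<delta> n p (fst x + v) \<partial>\<mu>) \<longlonglongrightarrow> (\<integral>x. indicator (fst -` cube (p - v) \<delta>) x \<partial>\<mu>)"
  proof (rule integral_dominated_convergence[where w="\<lambda>_. 1"])
    show "(\<lambda>x. cube_approx \<delta> n p (fst x + v)) \<in> borel_measurable \<mu>" for n
      by (simp add: measurable_cong_sets[OF sets refl])
    show "integrable \<mu> (\<lambda>_. 1::real)"
      using fin by (simp add: finite_measure.integrable_const)
    show "AE x in \<mu>. (\<lambda>n. cube_approx \<delta> n p (fst x + v)) \<longlonglongrightarrow> indicator (fst -` cube (p - v) \<delta>) x"
    proof (intro AE_I2)
      fix x :: "(real^'n) \<times> (real^'m)"
      have "indicator (fst -` cube (p - v) \<delta>) x = (indicator (cube p \<delta>) (fst x + v) :: real)"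
        by (simp add: indicator_def mem_cube_diff)
      then show "(\<lambda>n. cube_approx \<delta> n p (fst x + v)) \<longlonglongrightarrow> indicator (fst -` cube (p - v) \<delta>) x"
        by (simp only: cube_approx_tendsto_indicator)
    qed
    show "AE x in \<mu>. norm (cube_approx \<delta> n p (fst x + v)) \<le> 1" for n
      by (intro AE_I2) (simp add: abs_of_nonneg cube_approx_bounds)
  qed simp
  then show ?thesis using fin by simp
qed

lemma measure_cube_shift_le:
  fixes \<mu> :: "((real^'n) \<times> (real^'m)) measure"
  assumes \<mu>: "\<mu> \<in> POU_distributions a b"
    and v: "\<forall>k. 0 \<le> v$k" and p: "\<forall>k. a$k + v$k \<le> p$k"
  shows "measure \<mu> (fst -` cube p \<delta>) \<le> measure \<mu> (fst -` cube (p - v) \<delta>)"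
proof -
  have prob: "prob_space \<mu>" and sets: "sets \<mu> = sets borel"
    using \<mu> unfolding POU_distributions_def weak_closure_def distributions_on_def by auto
  have fin: "finite_measure \<mu>" using prob by (rule prob_space.finite_measure)
  show ?thesis
  proof (rule LIMSEQ_le)
    show "(\<lambda>n. \<integral>x. cube_approx \<delta> n p (fst x + 0) \<partial>\<mu>) \<longlonglongrightarrow> measure \<mu> (fst -` cube p \<delta>)"
      using integral_cube_approx_tendsto[OF fin sets, of \<delta> p 0] by simp
    show "(\<lambda>n. \<integral>x. cube_approx \<delta> n p (fst x + v) \<partial>\<mu>) \<longlonglongrightarrow> measure \<mu> (fst -` cube (p - v) \<delta>)"
      by (rule integral_cube_approx_tendsto[OF fin sets])
    show "\<exists>N. \<forall>n\<ge>N. (\<integral>x. cube_approx \<delta> n p (fst x + 0) \<partial>\<mu>) \<le> (\<integral>x. cube_approx \<delta> n p (fst x + v) \<partial>\<mu>)"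
      using integral_POU_distribution_shift_le[OF \<mu> continuous_on_cube_approx bounded_range_cube_approx
          nonneg_supported_above_cube_approx v] p
      by simp
  qed
qed

section \<open>Dyadic cubes\<close>

definition dyadic_cube :: "real^'n \<Rightarrow> nat \<Rightarrow> ('n \<Rightarrow> nat) \<Rightarrow> (real^'n) set" where
  "dyadic_cube a k j = cube (a + (1/2)^k *\<^sub>R (\<chi> i. real (j i))) ((1/2)^k)"

definition dyadic_inner :: "real^'n \<Rightarrow> nat \<Rightarrow> (real^'n) set \<Rightarrow> (real^'n) set" where
  "dyadic_inner a k U = \<Union> (dyadic_cube a k ` {j. dyadic_cube a k j \<subseteq> U})"

lemma sets_dyadic_cube[measurable]: "dyadic_cube a k j \<in> sets borel"
  unfolding dyadic_cube_def by simp

lemma countable_dyadic_index: "countable {j :: 'n::finite \<Rightarrow> nat. P j}"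
  by (rule countable_subset[OF subset_UNIV countableI_type])

lemma sets_dyadic_inner[measurable]: "dyadic_inner a k U \<in> sets borel"
  unfolding dyadic_inner_def by (rule sets.countable_UN') (auto intro: countable_dyadic_index)

lemma dyadic_inner_subset: "dyadic_inner a k U \<subseteq> U"
  unfolding dyadic_inner_def by auto

lemma disjoint_family_dyadic_cube:
  fixes a :: "real^'n" shows "disjoint_family_on (dyadic_cube a k) I"
  unfolding disjoint_family_on_def
proof (intro ballI impI)
  fix j j' :: "'n \<Rightarrow> nat" assume "j \<noteq> j'"
  have unique: "m = m'" if "0 < \<delta>" "c + \<delta> * m < x" "x \<le> c + \<delta> * m + \<delta>"
    "c + \<delta> * m' < x" "x \<le> c + \<delta> * m' + \<delta>" for m m' :: nat and c x \<delta> :: real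
  proof -
    have "\<delta> * m < \<delta> * (m' + 1)" "\<delta> * m' < \<delta> * (m + 1)" using that by (simp_all add: algebra_simps)
    then have "real m < real m' + 1" "real m' < real m + 1"
      using \<open>0 < \<delta>\<close> by (simp_all add: mult_less_cancel_left_pos)
    then show ?thesis by linarith
  qed
  show "dyadic_cube a k j \<inter> dyadic_cube a k j' = {}"
  proof (rule ccontr)
    assume "dyadic_cube a k j \<inter> dyadic_cube a k j' \<noteq> {}"
    then obtain x where "x \<in> dyadic_cube a k j" "x \<in> dyadic_cube a k j'" by auto
    then have "j i = j' i" for i
      unfolding dyadic_cube_def cube_def
      by (intro unique[of "(1/2)^k" "a$i" "j i" "x$i" "j' i"]) (auto simp: mult.commute)
    then show False using \<open>j \<noteq> j'\<close> by auto
  qed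
qed

lemma mem_dyadic_cube_exists:
  assumes "\<forall>i. a$i < x$i"
  obtains j where "x \<in> dyadic_cube a k j"
proof -
  define \<delta> :: real where "\<delta> = (1/2)^k"
  have \<delta>: "\<delta> > 0" unfolding \<delta>_def by simp
  define j where "j i = nat (\<lceil>(x$i - a$i) / \<delta>\<rceil> - 1)" for i
  have "x \<in> dyadic_cube a k j"
    unfolding dyadic_cube_def cube_def \<delta>_def[symmetric]
  proof (intro CollectI allI conjI)
    fix i
    define w where "w = (x$i - a$i) / \<delta>"
    have "w > 0" unfolding w_def using assms \<delta> by simp
    then have j: "real (j i) = real_of_int \<lceil>w\<rceil> - 1"
      unfolding j_def w_def[symmetric] by (simp add: one_le_ceiling)
    have x: "x$i = a$i + \<delta> * w" unfolding w_def using \<delta> by simp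
    have "real (j i) < w" "w \<le> real (j i) + 1" unfolding j using ceiling_correct[of w] by linarith+
    then show "(a + \<delta> *\<^sub>R (\<chi> i. real (j i))) $ i < x $ i"
      and "x $ i \<le> (a + \<delta> *\<^sub>R (\<chi> i. real (j i))) $ i + \<delta>"
      using \<delta> mult_left_mono[of w "real (j i) + 1" \<delta>] unfolding x by (auto simp: algebra_simps)
  qed
  then show ?thesis using that by blast
qed

lemma dist_le_in_dyadic_cube:
  fixes x y :: "real^'n"
  assumes "x \<in> dyadic_cube a k j" "y \<in> dyadic_cube a k j"
  shows "dist x y \<le> real CARD('n) * (1/2)^k"
proof -
  have "\<bar>(x - y)$i\<bar> \<le> (1/2)^k" for i
    using assms unfolding dyadic_cube_def cube_def by (simp add: abs_le_iff) (smt (verit))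
  then have "(\<Sum>i\<in>UNIV. \<bar>(x - y)$i\<bar>) \<le> (\<Sum>i\<in>(UNIV::'n set). (1/2)^k)"
    by (intro sum_mono) auto
  then show ?thesis using norm_le_l1_cart[of "x - y"] unfolding dist_norm by simp
qed

lemma indicator_dyadic_inner_tendsto:
  fixes a x :: "real^'n"
  assumes U: "open U" "U \<subseteq> {y. \<forall>i. a$i < y$i}"
  shows "(\<lambda>k. indicator (dyadic_inner a k U) x :: real) \<longlonglongrightarrow> indicator U x"
proof (cases "x \<in> U")
  case False
  then have "x \<notin> dyadic_inner a k U" for k using dyadic_inner_subset by blast
  then show ?thesis using False by simp
next
  case True
  obtain e where e: "e > 0" "ball x e \<subseteq> U" using U(1) True open_contains_ball by blast
  have "(\<lambda>k. real CARD('n) * (1/2)^k) \<longlonglongrightarrow> real CARD('n) * (0::real)"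
    by (intro tendsto_mult tendsto_const LIMSEQ_power_zero) auto
  then have "eventually (\<lambda>k. real CARD('n) * (1/2)^k < e) sequentially"
    using e(1) by (simp add: order_tendsto_iff)
  then have "eventually (\<lambda>k. x \<in> dyadic_inner a k U) sequentially"
  proof eventually_elim
    case (elim k)
    obtain j where j: "x \<in> dyadic_cube a k j" using mem_dyadic_cube_exists U(2) True by blast
    have "dyadic_cube a k j \<subseteq> ball x e"
      using dist_le_in_dyadic_cube[OF j] elim by fastforce
    then show ?case using j e(2) unfolding dyadic_inner_def by auto
  qed
  then show ?thesis using True by (simp add: tendsto_eventually eventually_mono)
qed

lemma measure_dyadic_inner_tendsto:
  fixes \<rho> :: "(real^'n) measure"
  assumes fin: "finite_measure \<rho>" and sets: "sets \<rho> = sets borel"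
    and U: "open U" "U \<subseteq> {y. \<forall>i. a$i < y$i}"
  shows "(\<lambda>k. measure \<rho> (dyadic_inner a k U)) \<longlonglongrightarrow> measure \<rho> U"
proof -
  have "(\<lambda>k. \<integral>x. (indicator (dyadic_inner a k U) x :: real) \<partial>\<rho>) \<longlonglongrightarrow> (\<integral>x. indicator U x \<partial>\<rho>)"
  proof (rule integral_dominated_convergence[where w="\<lambda>_. 1"])
    have "U \<in> sets \<rho>" using U(1) sets by simp
    then show "indicator U \<in> borel_measurable \<rho>" by simp
    show "indicator (dyadic_inner a k U) \<in> borel_measurable \<rho>" for k using sets by simp
    show "integrable \<rho> (\<lambda>_. 1::real)" using fin by (simp add: finite_measure.integrable_const)
    show "AE x in \<rho>. (\<lambda>k. indicator (dyadic_inner a k U) x :: real) \<longlonglongrightarrow> indicator U x"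
      using indicator_dyadic_inner_tendsto[OF U] by (intro AE_I2) blast
    show "AE x in \<rho>. norm (indicator (dyadic_inner a k U) x :: real) \<le> 1" for k
      by (intro AE_I2) (simp add: indicator_def)
  qed
  then show ?thesis using U(1) sets by simp
qed

lemma emeasure_dyadic_inner_proportional:
  fixes \<rho> \<sigma> :: "(real^'n) measure"
  assumes "sets \<rho> = sets borel" "sets \<sigma> = sets borel"
    and eq: "\<And>j. dyadic_cube a k j \<subseteq> U \<Longrightarrow> emeasure \<rho> (dyadic_cube a k j) = r * emeasure \<sigma> (dyadic_cube a k j)"
  shows "emeasure \<rho> (dyadic_inner a k U) = r * emeasure \<sigma> (dyadic_inner a k U)"
proof -
  let ?I = "{j. dyadic_cube a k j \<subseteq> U}"
  have "emeasure \<rho> (dyadic_inner a k U) = (\<integral>\<^sup>+j. emeasure \<rho> (dyadic_cube a k j) \<partial>count_space ?I)"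
    unfolding dyadic_inner_def
    by (rule emeasure_UN_countable) (use assms countable_dyadic_index disjoint_family_dyadic_cube in auto)
  also have "\<dots> = (\<integral>\<^sup>+j. r * emeasure \<sigma> (dyadic_cube a k j) \<partial>count_space ?I)"
    by (rule nn_integral_cong) (simp add: eq)
  also have "\<dots> = r * (\<integral>\<^sup>+j. emeasure \<sigma> (dyadic_cube a k j) \<partial>count_space ?I)"
    by (rule nn_integral_cmult) simp
  also have "(\<integral>\<^sup>+j. emeasure \<sigma> (dyadic_cube a k j) \<partial>count_space ?I) = emeasure \<sigma> (dyadic_inner a k U)"
    unfolding dyadic_inner_def
    by (rule emeasure_UN_countable[symmetric]) (use assms countable_dyadic_index disjoint_family_dyadic_cube in auto)
  finally show ?thesis .
qed

section \<open>The open kernel of a lower set\<close>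

definition orthant_lower_set :: "real^'n \<Rightarrow> (real^'n) set \<Rightarrow> bool" where
  "orthant_lower_set a S \<longleftrightarrow> (\<forall>y\<in>S. \<forall>i. a$i \<le> y$i) \<and>
     (\<forall>y\<in>S. \<forall>u. (\<forall>i. a$i \<le> u$i \<and> u$i \<le> y$i) \<longrightarrow> u \<in> S)"

lemma orthant_lower_set_slice:
  assumes "POU_set a b K" shows "orthant_lower_set a (slice K c)"
  using assms unfolding POU_set_def orthant_lower_set_def slice_def D0_def by blast

definition open_kernel :: "real^'n \<Rightarrow> (real^'n) set \<Rightarrow> (real^'n) set" where
  "open_kernel a S = \<Union>{box a y | y. y \<in> S \<and> (\<forall>i. a$i < y$i)}"

lemma open_open_kernel: "open (open_kernel a S)"
  unfolding open_kernel_def by (intro open_Union) auto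

lemma sets_open_kernel[measurable]: "open_kernel a S \<in> sets borel"
  by (rule borel_open[OF open_open_kernel])

lemma open_kernel_subset: "orthant_lower_set a S \<Longrightarrow> open_kernel a S \<subseteq> S"
  unfolding open_kernel_def orthant_lower_set_def by (fastforce simp: mem_box_cart less_imp_le)

lemma open_kernel_above: "open_kernel a S \<subseteq> {y. \<forall>i. a$i < y$i}"
  unfolding open_kernel_def by (auto simp: mem_box_cart)

lemma null_sets_coordinate_hyperplane: "{y::real^'n. y$i = c} \<in> null_sets lborel"
proof -
  have eq: "{y::real^'n. y$i = c} = {y. axis i 1 \<bullet> y = c}"
    by (auto simp: cart_eq_inner_axis inner_commute)
  have "negligible {y::real^'n. axis i 1 \<bullet> y = c}"
    by (rule negligible_hyperplane) (simp add: axis_eq_0_iff)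
  moreover have "closed {y::real^'n. axis i 1 \<bullet> y = c}" by (rule closed_hyperplane)
  ultimately show ?thesis
    unfolding eq negligible_iff_null_sets by (simp add: null_sets_completion_iff)
qed

lemma emeasure_inter_open_orthant:
  fixes S :: "(real^'n) set"
  assumes S: "S \<in> sets borel" and above: "\<forall>y\<in>S. \<forall>i. a$i \<le> y$i"
  shows "emeasure lborel (S \<inter> {y. \<forall>i. a$i < y$i}) = emeasure lborel S"
proof (rule antisym)
  show "emeasure lborel (S \<inter> {y. \<forall>i. a$i < y$i}) \<le> emeasure lborel S"
    using S by (intro emeasure_mono) auto
  define N where "N = (\<Union>i. {y::real^'n. y$i = a$i})"
  have "N \<in> null_sets lborel"
    unfolding N_def by (intro null_sets_UN null_sets_coordinate_hyperplane)
  then have "emeasure lborel S = emeasure lborel (S - N)"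
    using S by (simp add: emeasure_Diff_null_set)
  also have "\<dots> \<le> emeasure lborel (S \<inter> {y. \<forall>i. a$i < y$i})"
  proof (rule emeasure_mono)
    show "S - N \<subseteq> S \<inter> {y. \<forall>i. a$i < y$i}"
    proof
      fix y assume y: "y \<in> S - N"
      then have "a$i \<le> y$i" "y$i \<noteq> a$i" for i using above unfolding N_def by auto
      then have "a$i < y$i" for i by (metis order_le_neq_trans)
      then show "y \<in> S \<inter> {y. \<forall>i. a$i < y$i}" using y by blast
    qed
  qed (use S in simp)
  finally show "emeasure lborel S \<le> emeasure lborel (S \<inter> {y. \<forall>i. a$i < y$i})" .
qed

text \<open>The homothety with centre \<open>a\<close> and ratio \<open>l < 1\<close> maps every point of \<open>S\<close> strictly above
  \<open>a\<close> into the open box spanned by \<open>a\<close> and that point.\<close>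

lemma emeasure_open_kernel_ge_scaled:
  fixes S :: "(real^'n) set"
  assumes S: "S \<in> sets borel" and lower: "orthant_lower_set a S" and l: "0 < l" "l < 1"
  shows "ennreal (l ^ CARD('n)) * emeasure lborel S \<le> emeasure lborel (open_kernel a S)"
proof -
  let ?U = "open_kernel a S"
  define T where "T x = (1 - l) *\<^sub>R a + l *\<^sub>R x" for x :: "real^'n"
  have U: "?U \<in> sets borel" by measurable
  have T[measurable]: "T \<in> borel \<rightarrow>\<^sub>M borel"
    unfolding T_def by (rule borel_measurable_continuous_onI) (intro continuous_intros)
  have "lborel = density (distr lborel borel T) (\<lambda>_. \<bar>l\<bar> ^ CARD('n))"
    unfolding T_def using lborel_affine[of l "(1 - l) *\<^sub>R a"] l by simp
  then have "emeasure lborel ?U = emeasure (density (distr lborel borel T) (\<lambda>_. \<bar>l\<bar> ^ CARD('n))) ?U"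
    by simp
  also have "\<dots> = (\<integral>\<^sup>+x. ennreal (\<bar>l\<bar> ^ CARD('n)) * indicator ?U x \<partial>distr lborel borel T)"
    using U by (subst emeasure_density) (auto intro!: nn_integral_cong simp: ennreal_power)
  also have "\<dots> = ennreal (l ^ CARD('n)) * emeasure lborel (T -` ?U)"
    using U l by (simp add: nn_integral_cmult_indicator emeasure_distr)
  finally have scaled: "emeasure lborel ?U = ennreal (l ^ CARD('n)) * emeasure lborel (T -` ?U)" .
  have "S \<inter> {y. \<forall>i. a$i < y$i} \<subseteq> T -` ?U"
  proof
    fix y assume y: "y \<in> S \<inter> {y. \<forall>i. a$i < y$i}"
    have "a$i < T y $ i \<and> T y $ i < y$i" for i
    proof -
      have "T y $ i = a$i + l * (y$i - a$i)" unfolding T_def by (simp add: algebra_simps)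
      moreover have "0 < l * (y$i - a$i)" "l * (y$i - a$i) < 1 * (y$i - a$i)"
        using y l by (auto intro!: mult_strict_right_mono)
      ultimately show ?thesis by simp
    qed
    then show "y \<in> T -` ?U" using y unfolding open_kernel_def by (auto simp: mem_box_cart)
  qed
  then have "emeasure lborel (S \<inter> {y. \<forall>i. a$i < y$i}) \<le> emeasure lborel (T -` ?U)"
    using U by (intro emeasure_mono) (auto simp: measurable_sets_borel[OF T])
  then show ?thesis
    using emeasure_inter_open_orthant[OF S] lower unfolding scaled orthant_lower_set_def
    by (auto intro!: mult_left_mono)
qed

lemma emeasure_open_kernel:
  fixes S :: "(real^'n) set"
  assumes S: "S \<in> sets borel" and fin: "emeasure lborel S < \<infinity>" and lower: "orthant_lower_set a S"
  shows "emeasure lborel (open_kernel a S) = emeasure lborel S"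
proof (rule antisym)
  let ?U = "open_kernel a S"
  have sub: "?U \<subseteq> S" using lower by (rule open_kernel_subset)
  then show le: "emeasure lborel ?U \<le> emeasure lborel S" using S by (intro emeasure_mono) auto
  have fin_U: "emeasure lborel ?U < \<infinity>" using le fin by (rule order.strict_trans1)
  have "(l ^ CARD('n)) * measure lborel S \<le> measure lborel ?U" if "0 < l" "l < 1" for l :: real
  proof -
    have "ennreal (l ^ CARD('n) * measure lborel S) \<le> ennreal (measure lborel ?U)"
      using emeasure_open_kernel_ge_scaled[OF S lower that] fin fin_U that
      by (simp add: emeasure_eq_ennreal_measure less_top ennreal_mult)
    then show ?thesis by (simp add: ennreal_le_iff2) (smt (verit) measure_nonneg)
  qed
  moreover have "0 < 1 - (1/2::real)^Suc n" "1 - (1/2::real)^Suc n < 1" for n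
    using power_le_one[of "1/2::real" n] by auto
  ultimately have "\<forall>n. (1 - (1/2)^Suc n) ^ CARD('n) * measure lborel S \<le> measure lborel ?U"
    by blast
  moreover have "(\<lambda>n. (1 - (1/2)^Suc n) ^ CARD('n) * measure lborel S) \<longlonglongrightarrow> (1 - 0) ^ CARD('n) * measure lborel S"
    by (intro tendsto_intros LIMSEQ_power_zero[THEN LIMSEQ_Suc]) auto
  ultimately have "measure lborel S \<le> measure lborel ?U"
    by (intro LIMSEQ_le_const2) auto
  then show "emeasure lborel S \<le> emeasure lborel ?U"
    using fin fin_U by (simp add: emeasure_eq_ennreal_measure less_top)
qed

section \<open>Identification of the components\<close>

lemma cube_diff_subset:
  assumes S: "orthant_lower_set a S" and v: "\<forall>k. 0 \<le> v$k" and p: "\<forall>k. a$k + v$k \<le> p$k"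
    and sub: "cube p \<delta> \<subseteq> S"
  shows "cube (p - v) \<delta> \<subseteq> S"
proof
  fix y assume y: "y \<in> cube (p - v) \<delta>"
  then have "y + v \<in> S" using sub mem_cube_diff by blast
  moreover have "a$i \<le> y$i \<and> y$i \<le> (y + v)$i" for i
  proof -
    have "p$i - v$i < y$i" using y unfolding cube_def by auto
    moreover have "0 \<le> v$i" "a$i + v$i \<le> p$i" using v p by auto
    ultimately show ?thesis by simp
  qed
  ultimately show "y \<in> S" using S unfolding orthant_lower_set_def by blast
qed

lemma measure_uniform_cube_diff:
  fixes S :: "(real^'n) set"
  assumes S: "S \<in> sets borel" "orthant_lower_set a S"
    and v: "\<forall>k. 0 \<le> v$k" and p: "\<forall>k. a$k + v$k \<le> p$k" and sub: "cube p \<delta> \<subseteq> S"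
  shows "measure (uniform_measure lborel S) (cube (p - v) \<delta>) = measure (uniform_measure lborel S) (cube p \<delta>)"
proof -
  have "cube (p - v) \<delta> \<subseteq> S" using cube_diff_subset[OF S(2) v p sub] .
  then show ?thesis
    using S(1) sub emeasure_lborel_cube_diff[of p v \<delta>]
    by (simp add: measure_uniform_measure Int_absorb1 measure_def)
qed

lemma measure_dyadic_cube_proportional:
  fixes \<rho> \<sigma> :: "(real^'n) measure"
  assumes inv_\<rho>: "\<And>p v \<delta>. \<forall>k. 0 \<le> v$k \<Longrightarrow> \<forall>k. a$k + v$k \<le> p$k \<Longrightarrow> cube p \<delta> \<subseteq> S \<Longrightarrow>
        measure \<rho> (cube (p - v) \<delta>) = measure \<rho> (cube p \<delta>)"
    and inv_\<sigma>: "\<And>p v \<delta>. \<forall>k. 0 \<le> v$k \<Longrightarrow> \<forall>k. a$k + v$k \<le> p$k \<Longrightarrow> cube p \<delta> \<subseteq> S \<Longrightarrow>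
        measure \<sigma> (cube (p - v) \<delta>) = measure \<sigma> (cube p \<delta>)"
    and dom: "0 < t" "t * measure \<rho> (dyadic_cube a k j) \<le> measure \<sigma> (dyadic_cube a k j)"
    and Q: "dyadic_cube a k j \<subseteq> S"
  shows "measure \<rho> (dyadic_cube a k j) =
    measure \<rho> (cube a ((1/2)^k)) / measure \<sigma> (cube a ((1/2)^k)) * measure \<sigma> (dyadic_cube a k j)"
proof -
  define v where "v = (1/2::real)^k *\<^sub>R (\<chi> i. real (j i))"
  have Q_eq: "dyadic_cube a k j = cube (a + v) ((1/2)^k)" unfolding dyadic_cube_def v_def ..
  have v: "\<forall>i. 0 \<le> v$i" unfolding v_def by simp
  have "\<forall>i. a$i + v$i \<le> (a + v)$i" by simp
  note shift = inv_\<rho>[OF v this] inv_\<sigma>[OF v this]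
  have \<rho>: "measure \<rho> (dyadic_cube a k j) = measure \<rho> (cube a ((1/2)^k))"
    and \<sigma>: "measure \<sigma> (dyadic_cube a k j) = measure \<sigma> (cube a ((1/2)^k))"
    using shift Q unfolding Q_eq by simp_all
  show ?thesis
  proof (cases "measure \<sigma> (cube a ((1/2)^k)) = 0")
    case True
    then have "measure \<rho> (dyadic_cube a k j) = 0"
      using dom \<sigma> mult_pos_pos[of t "measure \<rho> (dyadic_cube a k j)"]
      by (smt (verit) measure_nonneg)
    then show ?thesis using \<rho> by simp
  qed (simp add: \<rho> \<sigma>)
qed

lemma measure_eq_if_agree_on_open_subsets:
  fixes \<rho> \<sigma> :: "'a::topological_space measure"
  assumes fin: "finite_measure \<rho>" "finite_measure \<sigma>"
    and sets: "sets \<rho> = sets borel" "sets \<sigma> = sets borel"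
    and U: "open U" "UNIV - U \<in> null_sets \<rho>" "UNIV - U \<in> null_sets \<sigma>"
    and eq: "\<And>V. open V \<Longrightarrow> V \<subseteq> U \<Longrightarrow> measure \<rho> V = measure \<sigma> V"
  shows "\<rho> = \<sigma>"
proof (rule measure_eqI_generator_eq[where \<Omega>=UNIV and E="Collect open" and A="\<lambda>_. UNIV"])
  fix G :: "'a set" assume "G \<in> Collect open"
  then have G: "open G" "G - (UNIV - U) = G \<inter> U" by auto
  have "emeasure \<rho> G = emeasure \<rho> (G \<inter> U)"
    using emeasure_Diff_null_set[OF U(2), of G] G sets by simp
  also have "\<dots> = emeasure \<sigma> (G \<inter> U)"
    using eq[of "G \<inter> U"] G U(1) fin sets by (simp add: finite_measure.emeasure_eq_measure open_Int)
  also have "\<dots> = emeasure \<sigma> G"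
    using emeasure_Diff_null_set[OF U(3), of G] G sets by simp
  finally show "emeasure \<rho> G = emeasure \<sigma> G" .
qed (use fin sets in \<open>auto simp: Int_stable_def sets_borel finite_measure.emeasure_finite\<close>)

lemma null_sets_if_dominated:
  assumes fin: "finite_measure \<rho>" and sets: "sets \<rho> = sets \<sigma>"
    and dom: "0 < t" "\<And>B. B \<in> sets \<sigma> \<Longrightarrow> t * measure \<rho> B \<le> measure \<sigma> B"
    and N: "N \<in> null_sets \<sigma>"
  shows "N \<in> null_sets \<rho>"
proof -
  have "t * measure \<rho> N \<le> 0"
    using dom(2)[OF null_setsD2[OF N]] null_setsD1[OF N] by (simp add: measure_def)
  then have "measure \<rho> N = 0"
    using dom(1) measure_nonneg[of \<rho> N] by (simp add: mult_le_0_iff)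
  then show ?thesis
    using N sets fin by (simp add: null_sets_def finite_measure.emeasure_eq_measure)
qed

lemma open_kernel_compl_null_sets_uniform:
  fixes S :: "(real^'n) set"
  assumes S: "S \<in> sets borel" "0 < emeasure lborel S" "emeasure lborel S < \<infinity>" "orthant_lower_set a S"
  shows "UNIV - open_kernel a S \<in> null_sets (uniform_measure lborel S)"
proof -
  let ?U = "open_kernel a S"
  have "emeasure lborel (S - ?U) = emeasure lborel S - emeasure lborel ?U"
    using S open_kernel_subset[OF S(4)] emeasure_open_kernel[OF S(1,3,4)]
    by (intro emeasure_Diff) auto
  then have "emeasure lborel (S \<inter> (UNIV - ?U)) = 0"
    using emeasure_open_kernel[OF S(1,3,4)] S(3) by (simp add: Diff_eq)
  moreover have "UNIV - ?U \<in> sets borel"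
    using open_open_kernel by (auto simp: Compl_eq_Diff_UNIV[symmetric])
  ultimately have "emeasure (uniform_measure lborel S) (UNIV - ?U) = 0"
    using S(1) by (simp add: emeasure_uniform_measure)
  then show ?thesis using \<open>UNIV - ?U \<in> sets borel\<close> by (intro null_setsI) simp_all
qed

lemma measure_dyadic_inner_proportional:
  fixes \<rho> \<sigma> :: "(real^'n) measure"
  assumes fin: "finite_measure \<rho>" "finite_measure \<sigma>" and sets: "sets \<rho> = sets borel" "sets \<sigma> = sets borel"
    and inv_\<rho>: "\<And>p v \<delta>. \<forall>k. 0 \<le> v$k \<Longrightarrow> \<forall>k. a$k + v$k \<le> p$k \<Longrightarrow> cube p \<delta> \<subseteq> S \<Longrightarrow>
        measure \<rho> (cube (p - v) \<delta>) = measure \<rho> (cube p \<delta>)"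
    and inv_\<sigma>: "\<And>p v \<delta>. \<forall>k. 0 \<le> v$k \<Longrightarrow> \<forall>k. a$k + v$k \<le> p$k \<Longrightarrow> cube p \<delta> \<subseteq> S \<Longrightarrow>
        measure \<sigma> (cube (p - v) \<delta>) = measure \<sigma> (cube p \<delta>)"
    and dom: "0 < t" "\<And>B. B \<in> sets borel \<Longrightarrow> t * measure \<rho> B \<le> measure \<sigma> B"
    and V: "V \<subseteq> S"
  shows "measure \<rho> (dyadic_inner a k V) =
    measure \<rho> (cube a ((1/2)^k)) / measure \<sigma> (cube a ((1/2)^k)) * measure \<sigma> (dyadic_inner a k V)"
    (is "_ = ?r * _")
proof -
  have "measure \<rho> (dyadic_cube a k j) = ?r * measure \<sigma> (dyadic_cube a k j)"
    if "dyadic_cube a k j \<subseteq> S" for j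
    using inv_\<rho> inv_\<sigma> dom that by (intro measure_dyadic_cube_proportional) auto
  then have "emeasure \<rho> (dyadic_inner a k V) = ennreal ?r * emeasure \<sigma> (dyadic_inner a k V)"
    using V fin sets
    by (intro emeasure_dyadic_inner_proportional)
      (auto simp: finite_measure.emeasure_eq_measure ennreal_mult[symmetric])
  then show ?thesis by (simp add: measure_def enn2real_mult)
qed

lemma tendsto_1_if_proportional:
  fixes x y r :: "nat \<Rightarrow> real"
  assumes x: "x \<longlonglongrightarrow> 1" and y: "y \<longlonglongrightarrow> 1" and eq: "\<And>k. x k = r k * y k"
  shows "r \<longlonglongrightarrow> 1"
proof -
  have "(\<lambda>k. x k / y k) \<longlonglongrightarrow> 1 / 1" using x y by (intro tendsto_divide) auto
  moreover have "eventually (\<lambda>k. y k > 0) sequentially" using y by (simp add: order_tendsto_iff)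
  then have "eventually (\<lambda>k. x k / y k = r k) sequentially" by eventually_elim (simp add: eq)
  ultimately show ?thesis by (simp add: Lim_transform_eventually)
qed

lemma uniform_measure_eqI_shift_invariant:
  fixes \<rho> :: "(real^'n) measure" and S :: "(real^'n) set"
  assumes \<rho>: "prob_space \<rho>" "sets \<rho> = sets borel"
    and S: "S \<in> sets borel" "0 < emeasure lborel S" "emeasure lborel S < \<infinity>" "orthant_lower_set a S"
    and dom: "0 < t" "\<And>B. B \<in> sets borel \<Longrightarrow> t * measure \<rho> B \<le> measure (uniform_measure lborel S) B"
    and inv: "\<And>p v \<delta>. \<forall>k. 0 \<le> v$k \<Longrightarrow> \<forall>k. a$k + v$k \<le> p$k \<Longrightarrow> cube p \<delta> \<subseteq> S \<Longrightarrow>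
        measure \<rho> (cube (p - v) \<delta>) = measure \<rho> (cube p \<delta>)"
  shows "\<rho> = uniform_measure lborel S"
proof -
  define \<sigma> where "\<sigma> = uniform_measure lborel S"
  define U where "U = open_kernel a S"
  define r where "r k = measure \<rho> (cube a ((1/2)^k)) / measure \<sigma> (cube a ((1/2)^k))" for k :: nat
  have \<sigma>: "prob_space \<sigma>" "sets \<sigma> = sets borel"
    unfolding \<sigma>_def using S by (auto intro!: prob_space_uniform_measure)
  have fin: "finite_measure \<rho>" "finite_measure \<sigma>"
    using \<rho>(1) \<sigma>(1) by (auto intro: prob_space.finite_measure)
  have U: "open U" "U \<subseteq> S" "U \<subseteq> {y. \<forall>i. a$i < y$i}"
    unfolding U_def by (rule open_open_kernel open_kernel_subset[OF S(4)] open_kernel_above)+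
  have \<sigma>_null: "UNIV - U \<in> null_sets \<sigma>"
    unfolding \<sigma>_def U_def using S by (rule open_kernel_compl_null_sets_uniform)
  have dom_\<sigma>: "t * measure \<rho> B \<le> measure \<sigma> B" if "B \<in> sets borel" for B
    unfolding \<sigma>_def using that by (rule dom(2))
  have \<rho>_null: "UNIV - U \<in> null_sets \<rho>"
  proof (rule null_sets_if_dominated[OF fin(1) _ dom(1) _ \<sigma>_null])
    show "sets \<rho> = sets \<sigma>" using \<rho>(2) \<sigma>(2) by simp
    show "t * measure \<rho> B \<le> measure \<sigma> B" if "B \<in> sets \<sigma>" for B
      using dom_\<sigma> that \<sigma>(2) by simp
  qed
  have full: "measure \<mu> U = 1" if "prob_space \<mu>" "sets \<mu> = sets borel" "UNIV - U \<in> null_sets \<mu>" for \<mu>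
  proof -
    have "measure \<mu> (UNIV - U) = 0" using null_setsD1[OF that(3)] by (simp add: measure_def)
    moreover have "space \<mu> = UNIV" "U \<in> sets \<mu>" using sets_eq_imp_space_eq[OF that(2)] that(2) U(1) by auto
    ultimately show ?thesis using prob_space.prob_compl[OF that(1), of U] by simp
  qed
  note U_full = full[OF \<rho> \<rho>_null] full[OF \<sigma> \<sigma>_null]
  have inv_\<sigma>: "measure \<sigma> (cube (p - v) \<delta>) = measure \<sigma> (cube p \<delta>)"
    if "\<forall>k. 0 \<le> v$k" "\<forall>k. a$k + v$k \<le> p$k" "cube p \<delta> \<subseteq> S" for p v \<delta>
    unfolding \<sigma>_def using S(1,4) that by (rule measure_uniform_cube_diff)
  have inner: "measure \<rho> (dyadic_inner a k V) = r k * measure \<sigma> (dyadic_inner a k V)" if "V \<subseteq> S" for k V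
    unfolding r_def by (rule measure_dyadic_inner_proportional[OF fin \<rho>(2) \<sigma>(2) inv inv_\<sigma> dom(1) dom_\<sigma> that])
  have r: "r \<longlonglongrightarrow> 1"
  proof (rule tendsto_1_if_proportional)
    show "(\<lambda>k. measure \<rho> (dyadic_inner a k U)) \<longlonglongrightarrow> 1"
      using measure_dyadic_inner_tendsto[OF fin(1) \<rho>(2) U(1,3)] U_full(1) by simp
    show "(\<lambda>k. measure \<sigma> (dyadic_inner a k U)) \<longlonglongrightarrow> 1"
      using measure_dyadic_inner_tendsto[OF fin(2) \<sigma>(2) U(1,3)] U_full(2) by simp
  qed (rule inner[OF U(2)])
  have "measure \<rho> V = measure \<sigma> V" if V: "open V" "V \<subseteq> U" for V
  proof (rule LIMSEQ_unique)
    have V': "V \<subseteq> {y. \<forall>i. a$i < y$i}" "V \<subseteq> S" using V(2) U(2,3) by auto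
    show "(\<lambda>k. measure \<rho> (dyadic_inner a k V)) \<longlonglongrightarrow> measure \<rho> V"
      by (rule measure_dyadic_inner_tendsto[OF fin(1) \<rho>(2) V(1) V'(1)])
    have "(\<lambda>k. r k * measure \<sigma> (dyadic_inner a k V)) \<longlonglongrightarrow> 1 * measure \<sigma> V"
      by (rule tendsto_mult[OF r measure_dyadic_inner_tendsto[OF fin(2) \<sigma>(2) V(1) V'(1)]])
    then show "(\<lambda>k. measure \<rho> (dyadic_inner a k V)) \<longlonglongrightarrow> measure \<sigma> V"
      using inner[OF V'(2)] by simp
  qed
  then show ?thesis
    unfolding \<sigma>_def[symmetric]
    by (rule measure_eq_if_agree_on_open_subsets[OF fin \<rho>(2) \<sigma>(2) U(1) \<rho>_null \<sigma>_null])
qed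

lemma measure_eq_W_if_marginal:
  fixes \<mu> :: "((real^'n) \<times> (real^'m)) measure"
  assumes sets: "sets \<mu> = sets borel" and null: "{x. snd x \<noteq> c} \<in> null_sets \<mu>"
    and marginal: "distr \<mu> borel fst = uniform_measure lborel (slice K c)"
  shows "\<mu> = W K c"
proof (rule measure_eqI)
  show "sets \<mu> = sets (W K c)" using sets by simp
  fix A assume A: "A \<in> sets \<mu>"
  define B where "B = (\<lambda>y. (y, c)) -` A"
  have B: "B \<in> sets borel"
    using A sets unfolding B_def by (simp add: measurable_sets_borel[OF measurable_Pair_const_borel])
  have fst_B: "fst -` B \<in> sets \<mu>"
    using B sets by (simp add: measurable_sets_borel[OF borel_measurable_fst_borel])
  have fst: "fst \<in> \<mu> \<rightarrow>\<^sub>M borel" by (simp add: measurable_cong_sets[OF sets refl])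
  have Pair: "(\<lambda>y. (y, c)) \<in> uniform_measure lborel (slice K c) \<rightarrow>\<^sub>M (borel :: ((real^'n) \<times> (real^'m)) measure)"
    by (simp add: measurable_cong_sets[OF sets_uniform_measure refl])
  have "A - {x. snd x \<noteq> c} = fst -` B - {x. snd x \<noteq> c}" unfolding B_def by auto
  then have "emeasure \<mu> A = emeasure \<mu> (fst -` B)"
    using emeasure_Diff_null_set[OF null A] emeasure_Diff_null_set[OF null fst_B] by simp
  also have "\<dots> = emeasure (distr \<mu> borel fst) B"
    using B sets_eq_imp_space_eq[OF sets] by (simp add: emeasure_distr[OF fst])
  also have "\<dots> = emeasure (W K c) A"
    unfolding marginal W_def B_def using A sets by (simp add: emeasure_distr[OF Pair])
  finally show "emeasure \<mu> A = emeasure (W K c) A" .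
qed

lemma POU_distributionD:
  assumes "\<mu> \<in> POU_distributions a b" shows "prob_space \<mu>" "sets \<mu> = sets borel"
  using assms unfolding POU_distributions_def weak_closure_def distributions_on_def by auto

lemma measure_distr_fst:
  fixes \<mu> :: "((real^'n) \<times> (real^'m)) measure"
  assumes "sets \<mu> = sets borel" "B \<in> sets borel"
  shows "measure (distr \<mu> borel fst) B = measure \<mu> (fst -` B)"
  using assms sets_eq_imp_space_eq[OF assms(1)]
  by (subst measure_distr) (auto simp: measurable_cong_sets[OF assms(1) refl])

lemma measure_W_fst:
  fixes K :: "((real^'n) \<times> (real^'m)) set"
  assumes "B \<in> sets borel"
  shows "measure (W K c) (fst -` B) = measure (uniform_measure lborel (slice K c)) B"
  using assms unfolding W_def
  by (subst measure_distr) (auto simp: measurable_cong_sets[OF sets_uniform_measure refl] vimage_def)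

lemma W_null_off_fibre:
  fixes K :: "((real^'n) \<times> (real^'m)) set"
  shows "{x. snd x \<noteq> c} \<in> null_sets (W K c)"
proof -
  have N: "{x :: (real^'n) \<times> (real^'m). snd x \<noteq> c} \<in> sets borel"
    by (rule borel_open) (intro open_Collect_neq continuous_intros)
  then have "emeasure (W K c) {x. snd x \<noteq> c} = 0"
    unfolding W_def
    by (subst emeasure_distr) (auto simp: measurable_cong_sets[OF sets_uniform_measure refl])
  then show ?thesis using N by (intro null_setsI) simp_all
qed

lemma convex_combination_component_eq:
  fixes t x\<^sub>1 x\<^sub>2 y\<^sub>1 y\<^sub>2 :: real
  assumes "0 < t" "t < 1" "x\<^sub>1 \<le> y\<^sub>1" "x\<^sub>2 \<le> y\<^sub>2" "t * x\<^sub>1 + (1 - t) * x\<^sub>2 = t * y\<^sub>1 + (1 - t) * y\<^sub>2"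
  shows "x\<^sub>1 = y\<^sub>1"
proof -
  have "t * (y\<^sub>1 - x\<^sub>1) + (1 - t) * (y\<^sub>2 - x\<^sub>2) = 0" using assms(5) by (simp add: algebra_simps)
  moreover have "0 \<le> t * (y\<^sub>1 - x\<^sub>1)" "0 \<le> (1 - t) * (y\<^sub>2 - x\<^sub>2)" using assms(1-4) by simp_all
  ultimately have "t * (y\<^sub>1 - x\<^sub>1) = 0" by linarith
  then show ?thesis using assms(1) by simp
qed

text \<open>The uniform distribution is shift invariant on cubes inside \<open>S\<close>, and neither component can
  gain mass under the shift, so neither can lose it.\<close>

lemma convex_component_shift_invariant:
  fixes \<rho>1 \<rho>2 :: "(real^'n) measure" and S :: "(real^'n) set"
  assumes t: "0 < t" "t < 1"
    and dec: "\<And>B. B \<in> sets borel \<Longrightarrow>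
      measure (uniform_measure lborel S) B = t * measure \<rho>1 B + (1 - t) * measure \<rho>2 B"
    and le: "measure \<rho>1 (cube p \<delta>) \<le> measure \<rho>1 (cube (p - v) \<delta>)"
      "measure \<rho>2 (cube p \<delta>) \<le> measure \<rho>2 (cube (p - v) \<delta>)"
    and S: "S \<in> sets borel" "orthant_lower_set a S"
    and v: "\<forall>k. 0 \<le> v$k" "\<forall>k. a$k + v$k \<le> p$k" "cube p \<delta> \<subseteq> S"
  shows "measure \<rho>1 (cube (p - v) \<delta>) = measure \<rho>1 (cube p \<delta>)"
proof -
  have "t * measure \<rho>1 (cube p \<delta>) + (1 - t) * measure \<rho>2 (cube p \<delta>) =
      measure (uniform_measure lborel S) (cube p \<delta>)"
    by (rule dec[symmetric]) simp
  also have "\<dots> = measure (uniform_measure lborel S) (cube (p - v) \<delta>)"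
    by (rule measure_uniform_cube_diff[OF S v, symmetric])
  also have "\<dots> = t * measure \<rho>1 (cube (p - v) \<delta>) + (1 - t) * measure \<rho>2 (cube (p - v) \<delta>)"
    by (rule dec) simp
  finally show ?thesis by (rule convex_combination_component_eq[OF t le, symmetric])
qed

lemma POU_component_eq_W:
  fixes a :: "real^'n" and b :: "'m::finite \<Rightarrow> ereal" and K :: "((real^'n) \<times> (real^'m)) set"
  assumes pou: "POU_set a b K"
    and pos: "0 < emeasure lborel (slice K c)" and fin: "emeasure lborel (slice K c) < \<infinity>"
    and \<mu>1: "\<mu>1 \<in> POU_distributions a b" and \<mu>2: "\<mu>2 \<in> POU_distributions a b"
    and t: "0 < t" "t < 1"
    and dec: "\<forall>A \<in> sets (W K c). measure (W K c) A = t * measure \<mu>1 A + (1 - t) * measure \<mu>2 A"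
  shows "\<mu>1 = W K c"
proof -
  define S where "S = slice K c"
  define \<rho>1 where "\<rho>1 = distr \<mu>1 borel fst"
  define \<rho>2 where "\<rho>2 = distr \<mu>2 borel fst"
  have S: "S \<in> sets borel" "orthant_lower_set a S"
    using pou orthant_lower_set_slice unfolding S_def POU_set_def by auto
  note \<mu>_props = POU_distributionD[OF \<mu>1] POU_distributionD[OF \<mu>2]
  have dom: "t * measure \<mu>1 A \<le> measure (W K c) A" if "A \<in> sets (W K c)" for A
    using dec that t by (simp add: measure_nonneg)
  have dec_marginal: "measure (uniform_measure lborel S) B = t * measure \<rho>1 B + (1 - t) * measure \<rho>2 B"
    if "B \<in> sets borel" for B
  proof -
    have "fst -` B \<in> sets (borel :: ((real^'n) \<times> (real^'m)) measure)"
      using that by (simp add: measurable_sets_borel[OF borel_measurable_fst_borel])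
    then show ?thesis
      using dec that \<mu>_props by (simp add: S_def \<rho>1_def \<rho>2_def measure_W_fst[symmetric] measure_distr_fst)
  qed
  have shift_le: "measure \<rho> (cube p \<delta>) \<le> measure \<rho> (cube (p - v) \<delta>)"
    if "\<rho> \<in> {\<rho>1, \<rho>2}" "\<forall>k. 0 \<le> v$k" "\<forall>k. a$k + v$k \<le> p$k" for \<rho> p v \<delta>
    using that measure_cube_shift_le[OF \<mu>1] measure_cube_shift_le[OF \<mu>2] \<mu>_props
    by (auto simp: \<rho>1_def \<rho>2_def measure_distr_fst)
  have "\<rho>1 = uniform_measure lborel S"
  proof (rule uniform_measure_eqI_shift_invariant[where a=a and t=t])
    have "fst \<in> \<mu>1 \<rightarrow>\<^sub>M (borel :: (real^'n) measure)"
      by (simp add: measurable_cong_sets[OF \<mu>_props(2) refl])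
    then show "prob_space \<rho>1"
      unfolding \<rho>1_def by (rule prob_space.prob_space_distr[OF \<mu>_props(1)])
    show "sets \<rho>1 = sets borel" unfolding \<rho>1_def by simp
    show "0 < emeasure lborel S" "emeasure lborel S < \<infinity>" using pos fin unfolding S_def .
    show "t * measure \<rho>1 B \<le> measure (uniform_measure lborel S) B" if "B \<in> sets borel" for B
      using dec_marginal[OF that] t by (simp add: measure_nonneg)
    show "measure \<rho>1 (cube (p - v) \<delta>) = measure \<rho>1 (cube p \<delta>)"
      if "\<forall>k. 0 \<le> v$k" "\<forall>k. a$k + v$k \<le> p$k" "cube p \<delta> \<subseteq> S" for p v \<delta>
    proof (rule convex_component_shift_invariant[OF t dec_marginal _ _ S that])
      show "measure \<rho>1 (cube p \<delta>) \<le> measure \<rho>1 (cube (p - v) \<delta>)"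
        and "measure \<rho>2 (cube p \<delta>) \<le> measure \<rho>2 (cube (p - v) \<delta>)"
        using shift_le[of \<rho>1 v p \<delta>] shift_le[of \<rho>2 v p \<delta>] that(1,2) by simp_all
    qed
  qed (use S t in auto)
  moreover have "{x. snd x \<noteq> c} \<in> null_sets \<mu>1"
    using \<mu>_props(2)
    by (intro null_sets_if_dominated[OF prob_space.finite_measure[OF \<mu>_props(1)] _ t(1) dom W_null_off_fibre])
      simp
  ultimately show ?thesis
    using \<mu>_props by (intro measure_eq_W_if_marginal) (simp_all add: \<rho>1_def S_def)
qed

lemma sets_D0: "D0 a b \<in> sets (borel :: ((real^'n) \<times> (real^'m::finite)) measure)"
proof -
  have "D0 a b = (\<Inter>i. {x. a$i \<le> fst x $ i}) \<inter> (\<Inter>j. {x. b j \<le> ereal (snd x $ j)})"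
    unfolding D0_def by auto
  also have "closed \<dots>"
    by (intro closed_Int closed_INT ballI closed_Collect_le continuous_intros)
  finally show ?thesis by simp
qed

lemma W_in_POU_distributions:
  fixes K :: "((real^'n) \<times> (real^'m::finite)) set"
  assumes pou: "POU_set a b K" and Kc: "K \<subseteq> {(y, z). z = c}"
    and pos: "0 < emeasure lborel (slice K c)" and fin: "emeasure lborel (slice K c) < \<infinity>"
  shows "W K c \<in> POU_distributions a b"
proof -
  have K: "K \<in> sets borel" using pou unfolding POU_set_def by auto
  have Pair: "(\<lambda>y. (y, c)) \<in> uniform_measure lborel (slice K c) \<rightarrow>\<^sub>M (borel :: ((real^'n) \<times> (real^'m)) measure)"
    by (simp add: measurable_cong_sets[OF sets_uniform_measure refl])
  have "emeasure (W K c) (D0 a b) = emeasure (uniform_measure lborel (slice K c)) ((\<lambda>y. (y, c)) -` D0 a b)"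
    unfolding W_def using sets_D0 by (subst emeasure_distr[OF Pair]) auto
  also have "\<dots> = emeasure lborel (slice K c \<inter> (\<lambda>y. (y, c)) -` D0 a b) / emeasure lborel (slice K c)"
    using K measurable_sets_borel[OF measurable_Pair_const_borel sets_D0]
    by (subst emeasure_uniform_measure) auto
  also have "slice K c \<inter> (\<lambda>y. (y, c)) -` D0 a b = slice K c"
    using pou unfolding POU_set_def slice_def by auto
  also have "emeasure lborel (slice K c) / emeasure lborel (slice K c) = 1"
    using pos fin by (intro ennreal_divide_self) auto
  finally have "W K c \<in> distributions_on (D0 a b)"
    unfolding distributions_on_def using prob_space_W[OF pos fin] by simp
  moreover have "W K c \<in> POU_uniforms a b"
    unfolding POU_uniforms_def using pou Kc pos fin by blast
  then have "measure_convex_hull (POU_uniforms a b) (W K c)"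
    unfolding measure_convex_hull_def
    by (intro exI[of _ "1::nat"] exI[of _ "\<lambda>_. 1::real"] exI[of _ "\<lambda>_. W K c"]) auto
  ultimately show ?thesis
    unfolding POU_distributions_def weak_closure_def by (auto intro!: bexI[of _ "W K c"])
qed

theorem mainTheorem16:
  fixes a :: "real^'n" and b :: "'m::finite \<Rightarrow> ereal"
    and K :: "((real^'n) \<times> (real^'m)) set" and c :: "real^'m"
  assumes "\<forall>j. b j \<noteq> \<infinity>"
    and "POU_set a b K"
    and "K \<subseteq> {(y,z). z = c}"
    and "\<forall>j. b j \<le> ereal (c$j)"
    and "0 < emeasure lborel (slice K c)"
    and "emeasure lborel (slice K c) < \<infinity>"
  shows "extreme_point_measures (POU_distributions a b) (W K c)"
  unfolding extreme_point_measures_def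
proof (intro conjI ballI allI impI)
  show "W K c \<in> POU_distributions a b"
    using assms(2,3,5,6) by (rule W_in_POU_distributions)
  fix \<mu>1 \<mu>2 t
  assume \<mu>: "\<mu>1 \<in> POU_distributions a b" "\<mu>2 \<in> POU_distributions a b"
    and dec: "0 < t \<and> t < 1 \<and> (\<forall>A\<in>sets (W K c). measure (W K c) A = t * measure \<mu>1 A + (1 - t) * measure \<mu>2 A)"
  then show "\<mu>1 = W K c"
    using POU_component_eq_W[OF assms(2,5,6) \<mu>] by blast
  have "\<forall>A\<in>sets (W K c). measure (W K c) A = (1 - t) * measure \<mu>2 A + (1 - (1 - t)) * measure \<mu>1 A"
    using dec by simp
  then show "\<mu>2 = W K c"
    using POU_component_eq_W[OF assms(2,5,6) \<mu>(2,1), of "1 - t"] dec by simp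
qed

end
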